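(* Let $g:\mathbb{R}\to\mathbb{R}$ be a univariate ReLU network whose weights and biases are rational numbers, let $x,\epsilon\in\mathbb{Q}$ with $\epsilon\ge 0$, and let $m$ be the number of weights and biases of $g$ and $d$ the maximal bit length of any of them (and of $x,\epsilon$). Then $\min_{t\in[x-\epsilon,x+\epsilon]}g(t)$ is attained and is a rational number whose bit length is $O(m\cdot d)$, i.e., bounded linearly in the encoding size of $g$.
   Context: A univariate ReLU network $g:\mathbb{R}\to\mathbb{R}$ is a composition of layers $h\mapsto\mathrm{ReLU}(W_k h+b_k)$, $k=1,\dots,\kappa$, with rational weight matrices $W_k$ and bias vectors $b_k$ encoded in binary, input and output dimension 1, and $\mathrm{ReLU}(t)=\max(0,t)$ applied coordinatewise. The bit length of a rational $p/q$ (in lowest terms) is the number of bits needed to write $p$ and $q$ in binary. *)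

theory Defs
  imports Complex_Main
begin

fun nat_bits :: "nat \<Rightarrow> nat" where
  "nat_bits n = (if n < 2 then 1 else nat_bits (n div 2) + 1)"

definition int_bits :: "int \<Rightarrow> nat" where
  "int_bits z = nat_bits (nat \<bar>z\<bar>)"

definition rat_bits :: "rat \<Rightarrow> nat" where
  "rat_bits r = (case quotient_of r of (p, q) \<Rightarrow> int_bits p + int_bits q)"

text \<open>A layer is a pair (W, b): W is a list of rows (each row a list of rationals),
  b the bias vector.  A network is a list of layers.\<close>
type_synonym layer = "rat list list \<times> rat list"
type_synonym relu_net = "layer list"

definition wf_net :: "relu_net \<Rightarrow> bool" where
  "wf_net L \<longleftrightarrow> L \<noteq> [] \<and>
     (\<exists>dims. length dims = length L + 1 \<and> dims ! 0 = 1 \<and> dims ! length L = 1 \<and>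
        (\<forall>k\<le>length L. dims ! k > 0) \<and>
        (\<forall>k<length L. length (fst (L ! k)) = dims ! (k + 1) \<and>
                       length (snd (L ! k)) = dims ! (k + 1) \<and>
                       (\<forall>row\<in>set (fst (L ! k)). length row = dims ! k)))"

definition layer_eval :: "layer \<Rightarrow> real list \<Rightarrow> real list" where
  "layer_eval Wb h =
     map (\<lambda>(row, bi). max 0 ((\<Sum>(w, v)\<leftarrow>zip (map real_of_rat row) h. w * v) + real_of_rat bi))
         (zip (fst Wb) (snd Wb))"

definition net_eval :: "relu_net \<Rightarrow> real \<Rightarrow> real" where
  "net_eval L t = hd (fold layer_eval L [t])"

definition net_params :: "relu_net \<Rightarrow> rat list" where
  "net_params L = concat (map (\<lambda>(W, b). concat W @ b) L)"

definition num_params :: "relu_net \<Rightarrow> nat" where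
  "num_params L = length (net_params L)"

end

theory Submission
  imports Defs
begin

text \<open>
  Let \<open>E\<close> be the product of the denominators of all parameters, and call a fraction \<open>p/q\<close>
  small if \<open>|p|, q \<le> N = 2^K\<close> with \<open>K = (2d + 1)(m + 1)\<close>. On an interval whose interior
  contains no small fraction every neuron computes an affine map \<open>t \<mapsto> a t + c\<close> with
  \<open>E a, E c\<close> integers of modulus at most \<open>N\<close>: inductively over the layers, each pre-activation
  is again such a map, and if it changed sign on the interval its root \<open>-c/a\<close> would be a small
  fraction, so every ReLU acts there as the identity or as zero. Hence \<open>g\<close> is affine between
  consecutive small fractions of \<open>[x - \<epsilon>, x + \<epsilon>]\<close>, whose endpoints are small fractions
  themselves, and its minimum is attained at one of them; an affine map of the above kind takes
  at a small fraction a value whose numerator and denominator are below \<open>2^(2K + 2)\<close>.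
\<close>

section \<open>Bit lengths\<close>

declare nat_bits.simps [simp del]

lemma nat_bits_less_2: "n < 2 \<Longrightarrow> nat_bits n = 1"
  by (subst nat_bits.simps) simp

lemma nat_bits_ge_2: "2 \<le> n \<Longrightarrow> nat_bits n = nat_bits (n div 2) + 1"
  by (subst nat_bits.simps) simp

lemma nat_bits_ge_1: "1 \<le> nat_bits n"
  by (subst nat_bits.simps) simp

lemma less_two_pow_nat_bits: "n < 2 ^ nat_bits n"
proof (induction n rule: nat_bits.induct)
  case (1 n)
  then show ?case
    by (cases "n < 2") (auto simp: nat_bits_less_2 nat_bits_ge_2)
qed

lemma nat_bits_le: "n < 2 ^ k \<Longrightarrow> 0 < k \<Longrightarrow> nat_bits n \<le> k"
proof (induction n arbitrary: k rule: nat_bits.induct)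
  case (1 n)
  show ?case
  proof (cases "n < 2")
    case True
    then show ?thesis
      using "1.prems" by (simp add: nat_bits_less_2)
  next
    case False
    then have "(2::nat) ^ 1 < 2 ^ k"
      using "1.prems" by simp
    then have "1 < k"
      by (simp only: power_strict_increasing_iff)
    then have "n div 2 < 2 ^ (k - 1)"
      using "1.prems" by (simp add: div_less_iff_less_mult flip: power_Suc2)
    then have "nat_bits (n div 2) \<le> k - 1"
      using "1.IH" False \<open>1 < k\<close> by simp
    then show ?thesis
      using False \<open>1 < k\<close> by (simp add: nat_bits_ge_2)
  qed
qed

lemma abs_less_two_pow_int_bits: "\<bar>z\<bar> < 2 ^ int_bits z"
  using less_two_pow_nat_bits[of "nat \<bar>z\<bar>"] unfolding int_bits_def by (simp add: nat_less_iff)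

lemma int_bits_le: "\<bar>z\<bar> < 2 ^ k \<Longrightarrow> 0 < k \<Longrightarrow> int_bits z \<le> k"
  unfolding int_bits_def by (rule nat_bits_le) (simp_all add: nat_less_iff)

lemma rat_bits_ge_2: "2 \<le> rat_bits r"
proof (cases "quotient_of r")
  case (Pair p q)
  then show ?thesis
    using nat_bits_ge_1[of "nat \<bar>p\<bar>"] nat_bits_ge_1[of "nat \<bar>q\<bar>"]
    by (simp add: rat_bits_def int_bits_def)
qed

lemma rat_bits_uminus [simp]: "rat_bits (- r) = rat_bits r"
  by (simp add: rat_bits_def rat_uminus_code int_bits_def split: prod.split)

lemma quotient_of_less_two_pow_rat_bits:
  assumes "quotient_of r = (p, q)"
  shows "\<bar>p\<bar> < 2 ^ rat_bits r" "q < 2 ^ rat_bits r"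
proof -
  have "rat_bits r = int_bits p + int_bits q"
    using assms by (simp add: rat_bits_def)
  moreover have "(2::int) ^ int_bits p \<le> 2 ^ (int_bits p + int_bits q)"
    and "(2::int) ^ int_bits q \<le> 2 ^ (int_bits p + int_bits q)"
    by (simp_all add: power_increasing)
  ultimately show "\<bar>p\<bar> < 2 ^ rat_bits r" "q < 2 ^ rat_bits r"
    using abs_less_two_pow_int_bits[of p] abs_less_two_pow_int_bits[of q]
      quotient_of_denom_pos[OF assms] by (auto intro: less_le_trans)
qed

lemma rat_bits_divide_le:
  assumes "0 < Q" "\<bar>P\<bar> < 2 ^ k" "Q < 2 ^ l" "0 < k" "0 < l"
  shows "rat_bits (of_int P / of_int Q) \<le> k + l"
proof -
  obtain p q where pq: "quotient_of (of_int P / of_int Q) = (p, q)"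
    by (cases "quotient_of (of_int P / of_int Q)")
  have "0 < q" "coprime p q"
    using quotient_of_denom_pos[OF pq] quotient_of_coprime[OF pq] by auto
  have "of_int P / of_int Q = (of_int p / of_int q :: rat)"
    using quotient_of_div[OF pq] .
  then have cross: "P * q = p * Q"
    using \<open>0 < Q\<close> \<open>0 < q\<close> by (simp add: frac_eq_eq flip: of_int_mult)
  then have "q dvd Q"
    using \<open>coprime p q\<close> by (metis coprime_commute coprime_dvd_mult_right_iff dvd_triv_right)
  then obtain c where c: "Q = q * c" ..
  then have "0 < c"
    using \<open>0 < Q\<close> \<open>0 < q\<close> by (simp add: zero_less_mult_iff)
  have "P = p * c"
    using cross c \<open>0 < q\<close> by (simp add: algebra_simps)
  then have "\<bar>p\<bar> \<le> \<bar>P\<bar>" and "q \<le> Q"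
    using c \<open>0 < c\<close> \<open>0 < q\<close> by (simp_all add: abs_mult mult_le_cancel_left1)
  then have "int_bits p \<le> k" "int_bits q \<le> l"
    using assms \<open>0 < q\<close> by (auto intro!: int_bits_le)
  then show ?thesis
    using pq by (simp add: rat_bits_def)
qed

lemma abs_of_rat_le_two_pow_rat_bits: "\<bar>real_of_rat r\<bar> \<le> 2 ^ rat_bits r"
proof -
  obtain p q where pq: "quotient_of r = (p, q)"
    by (cases "quotient_of r")
  have "1 \<le> q"
    using quotient_of_denom_pos[OF pq] by simp
  have "\<bar>real_of_rat r\<bar> = \<bar>of_int p\<bar> / of_int q"
    using quotient_of_div[OF pq] \<open>1 \<le> q\<close> by (simp add: of_rat_divide)
  also have "\<dots> \<le> \<bar>of_int p\<bar>"
    using \<open>1 \<le> q\<close> by (simp add: divide_le_eq mult_le_cancel_left1 del: of_int_abs)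
  also have "\<dots> \<le> 2 ^ rat_bits r"
    using quotient_of_less_two_pow_rat_bits(1)[OF pq] by (simp flip: of_int_abs)
  finally show ?thesis .
qed

section \<open>Fractions of bounded height and common denominators\<close>

definition fracs_upto :: "int \<Rightarrow> real set" where
  "fracs_upto N = {of_int p / of_int q | p q. \<bar>p\<bar> \<le> N \<and> 0 < q \<and> q \<le> N}"

definition frac_free :: "int \<Rightarrow> real \<Rightarrow> real \<Rightarrow> bool" where
  "frac_free N u v \<longleftrightarrow> fracs_upto N \<inter> {u<..<v} = {}"

lemma finite_fracs_upto: "finite (fracs_upto N)"
proof -
  have "fracs_upto N \<subseteq> (\<lambda>(p, q). of_int p / of_int q) ` ({-N..N} \<times> {1..N})"
    unfolding fracs_upto_def by (auto simp: image_iff abs_le_iff intro!: bexI[where x="(p, q)" for p q])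
  then show ?thesis
    by (rule finite_subset) auto
qed

lemma fracs_upto_mono: "N \<le> N' \<Longrightarrow> fracs_upto N \<subseteq> fracs_upto N'"
  unfolding fracs_upto_def by fastforce

lemma of_rat_mem_fracs_upto: "real_of_rat r \<in> fracs_upto (2 ^ rat_bits r)"
proof -
  obtain p q where pq: "quotient_of r = (p, q)"
    by (cases "quotient_of r")
  have "real_of_rat r = of_int p / of_int q"
    using quotient_of_div[OF pq] by (simp add: of_rat_divide)
  then show ?thesis
    unfolding fracs_upto_def
    using quotient_of_less_two_pow_rat_bits[OF pq] quotient_of_denom_pos[OF pq] by force
qed

lemma add_mem_fracs_upto:
  assumes "a \<in> fracs_upto A" "b \<in> fracs_upto B"
  shows "a + b \<in> fracs_upto (2 * A * B)"
proof -
  obtain p q r s where a: "a = of_int p / of_int q" "\<bar>p\<bar> \<le> A" "0 < q" "q \<le> A"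
    and b: "b = of_int r / of_int s" "\<bar>r\<bar> \<le> B" "0 < s" "s \<le> B"
    using assms unfolding fracs_upto_def by blast
  have "a + b = of_int (p * s + r * q) / of_int (q * s)"
    using a b by (simp add: field_simps)
  moreover have "\<bar>p * s + r * q\<bar> \<le> 2 * A * B"
  proof -
    have "\<bar>p * s + r * q\<bar> \<le> \<bar>p\<bar> * s + \<bar>r\<bar> * q"
      using a b by (metis abs_mult abs_of_pos abs_triangle_ineq)
    also have "\<dots> \<le> A * B + B * A"
      using a b by (intro add_mono mult_mono) auto
    finally show ?thesis by simp
  qed
  moreover have "0 < q * s" "q * s \<le> 2 * A * B"
  proof -
    have "0 \<le> A * B"
      using a b by simp
    moreover have "q * s \<le> A * B"
      using a b by (intro mult_mono) auto
    ultimately show "0 < q * s" "q * s \<le> 2 * A * B"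
      using a b by (simp, linarith)
  qed
  ultimately show ?thesis
    unfolding fracs_upto_def by blast
qed

lemma of_rat_add_mem_fracs_upto:
  assumes "rat_bits x \<le> d" "rat_bits y \<le> d"
  shows "real_of_rat (x + y) \<in> fracs_upto (2 ^ (2 * d + 1))"
proof -
  have "real_of_rat z \<in> fracs_upto (2 ^ d)" if "rat_bits z \<le> d" for z
  proof -
    have "(2::int) ^ rat_bits z \<le> 2 ^ d"
      using that by (rule power_increasing) simp
    then show ?thesis
      using of_rat_mem_fracs_upto[of z] fracs_upto_mono by blast
  qed
  then have "real_of_rat x + real_of_rat y \<in> fracs_upto (2 * 2 ^ d * 2 ^ d)"
    using assms by (intro add_mem_fracs_upto)
  moreover have "(2::int) * 2 ^ d * 2 ^ d = 2 ^ (2 * d + 1)"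
    by (simp add: power_add power_mult_distrib flip: power2_eq_square power_mult)
  ultimately show ?thesis
    by (simp add: of_rat_add)
qed

definition common_denom :: "rat list \<Rightarrow> int" where
  "common_denom xs = (\<Prod>x\<leftarrow>xs. snd (quotient_of x))"

lemma common_denom_pos: "0 < common_denom xs"
  unfolding common_denom_def by (induction xs) (simp_all add: quotient_of_denom_pos')

lemma common_denom_append: "common_denom (xs @ ys) = common_denom xs * common_denom ys"
  by (simp add: common_denom_def)

lemma common_denom_mult_Ints:
  assumes "x \<in> set xs"
  shows "of_int (common_denom xs) * real_of_rat x \<in> \<int>"
proof -
  obtain p q where pq: "quotient_of x = (p, q)"
    by (cases "quotient_of x")
  have "q dvd common_denom xs"
    using assms pq unfolding common_denom_def by (intro prod_list_dvd) (auto intro: image_eqI[where x = x])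
  then obtain c where c: "common_denom xs = q * c" ..
  have "of_int q * real_of_rat x = of_int p"
    using quotient_of_div[OF pq] quotient_of_denom_pos[OF pq] by (simp add: of_rat_divide)
  then have "of_int (common_denom xs) * real_of_rat x = of_int (c * p)"
    using c by (simp add: algebra_simps)
  then show ?thesis
    by simp
qed

lemma common_denom_le:
  assumes "\<forall>r\<in>set xs. rat_bits r \<le> d"
  shows "common_denom xs \<le> 2 ^ (d * length xs)"
  using assms
proof (induction xs)
  case Nil
  then show ?case by (simp add: common_denom_def)
next
  case (Cons x xs)
  have "snd (quotient_of x) < 2 ^ rat_bits x"
    using quotient_of_less_two_pow_rat_bits(2)[of x "fst (quotient_of x)"] by simp
  also have "\<dots> \<le> 2 ^ d"
    using Cons.prems by (simp add: power_increasing)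
  finally have "snd (quotient_of x) * common_denom xs \<le> 2 ^ d * 2 ^ (d * length xs)"
    using Cons common_denom_pos[of xs] by (intro mult_mono) auto
  then show ?case
    by (simp add: common_denom_def power_add)
qed

lemma common_denom_mult_two_pow_le:
  assumes "\<forall>r\<in>set ps. rat_bits r \<le> d"
  shows "of_int (common_denom ps) * 2 ^ ((d + 1) * length ps) \<le> (2::real) ^ ((2 * d + 1) * length ps)"
proof -
  have "of_int (common_denom ps) \<le> (2::real) ^ (d * length ps)"
    using common_denom_le[OF assms] by (metis of_int_le_iff of_int_numeral of_int_power)
  then have "of_int (common_denom ps) * 2 ^ ((d + 1) * length ps) \<le> (2::real) ^ (d * length ps) * 2 ^ ((d + 1) * length ps)"
    by (intro mult_right_mono) auto
  also have "\<dots> = 2 ^ ((2 * d + 1) * length ps)"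
    by (simp add: algebra_simps flip: power_add)
  finally show ?thesis .
qed

section \<open>Affine pieces of a ReLU network\<close>

definition dot :: "real list \<Rightarrow> real list \<Rightarrow> real" where
  "dot ws vs = (\<Sum>(w, v)\<leftarrow>zip ws vs. w * v)"

lemma dot_Nil [simp]: "dot [] vs = 0" "dot ws [] = 0"
  by (simp_all add: dot_def)

lemma dot_Cons [simp]: "dot (w # ws) (v # vs) = w * v + dot ws vs"
  by (simp add: dot_def)

lemma dot_Ints:
  assumes "\<And>w. w \<in> set ws \<Longrightarrow> of_int F * w \<in> \<int>" "\<And>v. v \<in> set vs \<Longrightarrow> of_int E * v \<in> \<int>"
  shows "of_int (E * F) * dot ws vs \<in> \<int>"
  using assms
proof (induction ws arbitrary: vs)
  case (Cons w ws)
  show ?case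
  proof (cases vs)
    case (Cons v vs')
    have "of_int (E * F) * dot (w # ws) vs = (of_int F * w) * (of_int E * v) + of_int (E * F) * dot ws vs'"
      using Cons by (simp add: algebra_simps)
    also have "\<dots> \<in> \<int>"
      using Cons Cons.IH[of vs'] Cons.prems by (intro Ints_add Ints_mult[of "of_int F * w"]) auto
    finally show ?thesis .
  qed simp
qed simp

lemma abs_dot_le:
  assumes "\<And>w. w \<in> set ws \<Longrightarrow> \<bar>w\<bar> \<le> B" "\<And>v. v \<in> set vs \<Longrightarrow> \<bar>v\<bar> \<le> M" "0 \<le> M"
  shows "\<bar>dot ws vs\<bar> \<le> real (length ws) * (B * M)"
  using assms(1,2)
proof (induction ws arbitrary: vs)
  case (Cons w ws)
  have "0 \<le> B"
    using Cons.prems(1)[of w] by simp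
  show ?case
  proof (cases vs)
    case Nil
    then show ?thesis
      using \<open>0 \<le> B\<close> assms(3) by simp
  next
    case (Cons v vs')
    have "\<bar>dot (w # ws) vs\<bar> \<le> \<bar>w\<bar> * \<bar>v\<bar> + \<bar>dot ws vs'\<bar>"
      using Cons abs_triangle_ineq[of "w * v" "dot ws vs'"] by (simp add: abs_mult)
    also have "\<dots> \<le> B * M + real (length ws) * (B * M)"
      using Cons Cons.IH[of vs'] Cons.prems \<open>0 \<le> B\<close> by (intro add_mono mult_mono) auto
    finally show ?thesis
      by (simp add: algebra_simps)
  qed
qed simp

definition eval_affine :: "real \<Rightarrow> real \<times> real \<Rightarrow> real" where
  "eval_affine t ac = fst ac * t + snd ac"

lemma dot_map_eval_affine: "dot ws (map (eval_affine t) cs) = dot ws (map fst cs) * t + dot ws (map snd cs)"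
proof (induction ws arbitrary: cs)
  case (Cons w ws)
  then show ?case
    by (cases cs) (simp_all add: eval_affine_def algebra_simps)
qed simp

definition bounded_affine :: "int \<Rightarrow> real \<Rightarrow> real \<times> real \<Rightarrow> bool" where
  "bounded_affine E M ac \<longleftrightarrow>
     of_int E * fst ac \<in> \<int> \<and> of_int E * snd ac \<in> \<int> \<and> \<bar>fst ac\<bar> \<le> M \<and> \<bar>snd ac\<bar> \<le> M"

lemma bounded_affine_scaled_Ints:
  assumes "0 < E" "bounded_affine E M (a, c)" "of_int E * M \<le> of_int N"
  obtains \<alpha> \<gamma> where "of_int E * a = of_int \<alpha>" "of_int E * c = of_int \<gamma>" "\<bar>\<alpha>\<bar> \<le> N" "\<bar>\<gamma>\<bar> \<le> N"
proof -
  obtain \<alpha> \<gamma> where \<alpha>: "of_int E * a = of_int \<alpha>" and \<gamma>: "of_int E * c = of_int \<gamma>"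
    using assms(2) by (auto simp: bounded_affine_def elim!: Ints_cases)
  have "\<bar>of_int E * x\<bar> \<le> of_int E * M" if "\<bar>x\<bar> \<le> M" for x :: real
    using assms(1) that by (simp add: abs_mult)
  then have "\<bar>of_int \<alpha>\<bar> \<le> of_int E * M" "\<bar>of_int \<gamma>\<bar> \<le> of_int E * M"
    using assms(2) unfolding \<alpha>[symmetric] \<gamma>[symmetric] by (simp_all add: bounded_affine_def)
  then have "\<bar>\<alpha>\<bar> \<le> N" "\<bar>\<gamma>\<bar> \<le> N"
    using assms(3) by linarith+
  with \<alpha> \<gamma> show ?thesis
    using that by blast
qed

lemma sign_change_not_frac_free:
  assumes "0 < E" "bounded_affine E M (a, c)" "of_int E * M \<le> of_int N"
    and "t1 \<in> {u..v}" "t2 \<in> {u..v}" "a * t1 + c < 0" "0 < a * t2 + c"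
  shows "\<not> frac_free N u v"
proof -
  have "a \<noteq> 0"
    using assms(6,7) by auto
  define r where "r = - c / a"
  have "a * (t1 - r) < 0" "0 < a * (t2 - r)"
    using assms(6,7) \<open>a \<noteq> 0\<close> by (simp_all add: r_def algebra_simps)
  then have "(t1 - r) * (t2 - r) < 0"
    by (auto simp: mult_less_0_iff zero_less_mult_iff)
  then have "u < r \<and> r < v"
    using assms(4,5) by (auto simp: mult_less_0_iff)
  obtain \<alpha> \<gamma> where \<alpha>: "of_int E * a = of_int \<alpha>" and \<gamma>: "of_int E * c = of_int \<gamma>"
    and "\<bar>\<alpha>\<bar> \<le> N" "\<bar>\<gamma>\<bar> \<le> N"
    using bounded_affine_scaled_Ints[OF assms(1-3)] .
  have "\<alpha> \<noteq> 0"
    using \<alpha> \<open>a \<noteq> 0\<close> assms(1) by auto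
  have "r = - of_int \<gamma> / of_int \<alpha>"
    using assms(1) unfolding r_def \<alpha>[symmetric] \<gamma>[symmetric] by simp
  also have "\<dots> = of_int (- sgn \<alpha> * \<gamma>) / of_int \<bar>\<alpha>\<bar>"
    using \<open>\<alpha> \<noteq> 0\<close> by (cases "0 < \<alpha>") simp_all
  finally have "r = of_int (- sgn \<alpha> * \<gamma>) / of_int \<bar>\<alpha>\<bar>" .
  moreover have "\<bar>- sgn \<alpha> * \<gamma>\<bar> \<le> N" "0 < \<bar>\<alpha>\<bar>"
    using \<open>\<alpha> \<noteq> 0\<close> \<open>\<bar>\<gamma>\<bar> \<le> N\<close> by (simp_all add: abs_mult)
  ultimately have "r \<in> fracs_upto N"
    using \<open>\<bar>\<alpha>\<bar> \<le> N\<close> unfolding fracs_upto_def by blast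
  with \<open>u < r \<and> r < v\<close> show ?thesis
    unfolding frac_free_def by auto
qed

definition relu_piece :: "real \<Rightarrow> real \<Rightarrow> real \<times> real \<Rightarrow> real \<times> real" where
  "relu_piece u v ac = (if \<forall>t\<in>{u..v}. 0 \<le> eval_affine t ac then ac else (0, 0))"

lemma bounded_affine_relu_piece: "bounded_affine E M ac \<Longrightarrow> bounded_affine E M (relu_piece u v ac)"
  by (auto simp: relu_piece_def bounded_affine_def)

lemma max_0_eval_affine_eq_relu_piece:
  assumes "0 < E" "bounded_affine E M ac" "of_int E * M \<le> of_int N" "frac_free N u v" "t \<in> {u..v}"
  shows "max 0 (eval_affine t ac) = eval_affine t (relu_piece u v ac)"
proof (cases "\<forall>t\<in>{u..v}. 0 \<le> eval_affine t ac")
  case True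
  then show ?thesis
    using assms(5) by (simp add: relu_piece_def)
next
  case False
  then obtain t1 where "t1 \<in> {u..v}" "eval_affine t1 ac < 0"
    by (auto simp: not_le)
  have "eval_affine t ac \<le> 0"
  proof (rule ccontr)
    assume "\<not> eval_affine t ac \<le> 0"
    then have "\<not> frac_free N u v"
      using sign_change_not_frac_free[of E M "fst ac" "snd ac"] assms \<open>t1 \<in> {u..v}\<close> \<open>eval_affine t1 ac < 0\<close>
      by (simp add: eval_affine_def)
    then show False
      using assms(4) by simp
  qed
  moreover have "relu_piece u v ac = (0, 0)"
    unfolding relu_piece_def using False by (rule if_not_P)
  ultimately show ?thesis
    by (simp add: eval_affine_def)
qed

definition pre_activation :: "(real \<times> real) list \<Rightarrow> rat list \<times> rat \<Rightarrow> real \<times> real" where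
  "pre_activation cs rb =
     (dot (map real_of_rat (fst rb)) (map fst cs),
      dot (map real_of_rat (fst rb)) (map snd cs) + real_of_rat (snd rb))"

lemma layer_eval_map_eval_affine:
  "layer_eval (W, b) (map (eval_affine t) cs) =
     map (\<lambda>rb. max 0 (eval_affine t (pre_activation cs rb))) (zip W b)"
  by (simp add: layer_eval_def pre_activation_def case_prod_beta eval_affine_def
      dot_map_eval_affine add.assoc flip: dot_def)

lemma Suc_mult_two_pow_le:
  assumes "n < P"
  shows "real (Suc n) * 2 ^ d \<le> 2 ^ ((d + 1) * P)"
proof -
  have "Suc n \<le> 2 ^ P"
    using assms less_exp[of P] by linarith
  then have "real (Suc n) \<le> 2 ^ P"
    by (metis of_nat_le_iff of_nat_numeral of_nat_power)
  moreover have "(2::real) ^ d \<le> 2 ^ (d * P)"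
    using assms by (intro power_increasing) auto
  ultimately have "real (Suc n) * 2 ^ d \<le> 2 ^ P * 2 ^ (d * P)"
    by (intro mult_mono) auto
  then show ?thesis
    by (simp add: power_add algebra_simps)
qed

lemma param_bounds_common_denom:
  assumes "\<forall>r\<in>set ps. rat_bits r \<le> d" "r \<in> set ps"
  shows "of_int (common_denom ps) * real_of_rat r \<in> \<int>" "\<bar>real_of_rat r\<bar> \<le> 2 ^ d"
proof -
  have "(2::real) ^ rat_bits r \<le> 2 ^ d"
    using assms by (intro power_increasing) auto
  then show "\<bar>real_of_rat r\<bar> \<le> 2 ^ d"
    by (rule order_trans[OF abs_of_rat_le_two_pow_rat_bits])
  show "of_int (common_denom ps) * real_of_rat r \<in> \<int>"
    using assms(2) by (rule common_denom_mult_Ints)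
qed

lemma bounded_affine_pre_activation:
  assumes "0 < E" "1 \<le> M" "\<forall>ac\<in>set cs. bounded_affine E M ac"
    and "\<forall>r\<in>set ps. rat_bits r \<le> d" "set row \<subseteq> set ps" "bi \<in> set ps" "length row < length ps"
  shows "bounded_affine (E * common_denom ps) (M * 2 ^ ((d + 1) * length ps)) (pre_activation cs (row, bi))"
proof -
  define F where "F = common_denom ps"
  define ws where "ws = map real_of_rat row"
  have ws: "of_int F * w \<in> \<int>" "\<bar>w\<bar> \<le> 2 ^ d" if "w \<in> set ws" for w
    using that param_bounds_common_denom[OF assms(4)] assms(5) unfolding ws_def F_def by auto
  have cs: "of_int E * fst ac \<in> \<int>" "of_int E * snd ac \<in> \<int>" "\<bar>fst ac\<bar> \<le> M" "\<bar>snd ac\<bar> \<le> M"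
    if "ac \<in> set cs" for ac
    using assms(3) that by (auto simp: bounded_affine_def)
  have "of_int (E * F) * real_of_rat bi = of_int E * (of_int F * real_of_rat bi)"
    by simp
  then have bi_Ints: "of_int (E * F) * real_of_rat bi \<in> \<int>"
    using param_bounds_common_denom(1)[OF assms(4,6)] unfolding F_def by (metis Ints_mult Ints_of_int)
  have "(2::real) ^ d * 1 \<le> 2 ^ d * M"
    using assms(2) by (intro mult_left_mono) auto
  then have bi_le: "\<bar>real_of_rat bi\<bar> \<le> 2 ^ d * M"
    using param_bounds_common_denom(2)[OF assms(4,6)] by linarith
  have "of_int (E * F) * dot ws (map fst cs) \<in> \<int>" "of_int (E * F) * dot ws (map snd cs) \<in> \<int>"
    by (rule dot_Ints; use ws cs in auto)+
  moreover have "\<bar>dot ws (map fst cs)\<bar> \<le> real (length row) * (2 ^ d * M)"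
    "\<bar>dot ws (map snd cs)\<bar> \<le> real (length row) * (2 ^ d * M)"
    unfolding length_map[of real_of_rat row, folded ws_def, symmetric]
    by (rule abs_dot_le; use ws cs assms(2) in auto)+
  moreover have "M * (real (Suc (length row)) * 2 ^ d) \<le> M * 2 ^ ((d + 1) * length ps)"
    using Suc_mult_two_pow_le[OF assms(7), of d] assms(2) by (intro mult_left_mono) auto
  moreover have "0 \<le> M * 2 ^ d"
    using assms(2) by simp
  ultimately show ?thesis
    using bi_Ints bi_le abs_triangle_ineq[of "dot ws (map snd cs)" "real_of_rat bi"]
    unfolding bounded_affine_def pre_activation_def F_def ws_def
    by (auto simp: distrib_left algebra_simps)
qed

definition layer_pieces :: "real \<Rightarrow> real \<Rightarrow> layer \<Rightarrow> (real \<times> real) list \<Rightarrow> (real \<times> real) list" where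
  "layer_pieces u v Wb cs = map (relu_piece u v \<circ> pre_activation cs) (zip (fst Wb) (snd Wb))"

lemma layer_pieces_correct:
  fixes W :: "rat list list" and b :: "rat list"
  defines "ps \<equiv> concat W @ b"
  assumes "0 < E" "1 \<le> M" "\<forall>ac\<in>set cs. bounded_affine E M ac" "\<forall>r\<in>set ps. rat_bits r \<le> d"
    and "of_int (E * common_denom ps) * (M * 2 ^ ((d + 1) * length ps)) \<le> of_int N"
    and "frac_free N u v"
  shows "\<forall>ac\<in>set (layer_pieces u v (W, b) cs).
           bounded_affine (E * common_denom ps) (M * 2 ^ ((d + 1) * length ps)) ac"
    and "t \<in> {u..v} \<Longrightarrow> layer_eval (W, b) (map (eval_affine t) cs) = map (eval_affine t) (layer_pieces u v (W, b) cs)"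
proof -
  have pre: "bounded_affine (E * common_denom ps) (M * 2 ^ ((d + 1) * length ps)) (pre_activation cs rb)"
    if "rb \<in> set (zip W b)" for rb
  proof -
    obtain row bi where "rb = (row, bi)"
      by fastforce
    then have rb: "rb = (row, bi)" "row \<in> set W" "bi \<in> set b"
      using that by (auto dest: set_zip_leftD set_zip_rightD)
    have "length row \<le> length (concat W)"
      using rb(2) by (induction W) auto
    then have "length row < length ps"
      using rb(3) unfolding ps_def by (cases b) auto
    moreover have "set row \<subseteq> set ps" "bi \<in> set ps"
      using rb unfolding ps_def by auto
    ultimately show ?thesis
      using bounded_affine_pre_activation[OF assms(2-5)] rb(1) by blast
  qed
  then show "\<forall>ac\<in>set (layer_pieces u v (W, b) cs).
               bounded_affine (E * common_denom ps) (M * 2 ^ ((d + 1) * length ps)) ac"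
    by (auto simp: layer_pieces_def bounded_affine_relu_piece)
  show "layer_eval (W, b) (map (eval_affine t) cs) = map (eval_affine t) (layer_pieces u v (W, b) cs)"
    if t: "t \<in> {u..v}"
  proof -
    have "0 < E * common_denom ps"
      using assms(2) common_denom_pos[of ps] by simp
    then have "max 0 (eval_affine t (pre_activation cs rb)) = eval_affine t (relu_piece u v (pre_activation cs rb))"
      if "rb \<in> set (zip W b)" for rb
      using max_0_eval_affine_eq_relu_piece[OF _ pre[OF that] assms(6,7) t] by simp
    then show ?thesis
      unfolding layer_eval_map_eval_affine layer_pieces_def by simp
  qed
qed

definition net_pieces :: "real \<Rightarrow> real \<Rightarrow> relu_net \<Rightarrow> (real \<times> real) list" where
  "net_pieces u v L = fold (layer_pieces u v) L [(1, 0)]"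

lemma net_params_snoc: "net_params (L @ [(W, b)]) = net_params L @ (concat W @ b)"
  by (simp add: net_params_def)

lemma common_denom_append_mult_two_pow_le:
  assumes "\<forall>r\<in>set (qs @ ps). rat_bits r \<le> d" "2 ^ ((2 * d + 1) * length (qs @ ps)) \<le> N"
  shows "of_int (common_denom qs * common_denom ps) * ((2::real) ^ ((d + 1) * length qs) * 2 ^ ((d + 1) * length ps))
           \<le> of_int N"
proof -
  have "of_int (common_denom qs * common_denom ps) * ((2::real) ^ ((d + 1) * length qs) * 2 ^ ((d + 1) * length ps))
        = of_int (common_denom (qs @ ps)) * 2 ^ ((d + 1) * length (qs @ ps))"
    by (simp add: common_denom_append power_add algebra_simps)
  also have "\<dots> \<le> 2 ^ ((2 * d + 1) * length (qs @ ps))"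
    using assms(1) by (rule common_denom_mult_two_pow_le)
  also have "\<dots> \<le> of_int N"
    using assms(2) by (metis of_int_le_iff of_int_numeral of_int_power)
  finally show ?thesis .
qed

lemma net_pieces_correct:
  assumes "\<forall>r\<in>set (net_params L). rat_bits r \<le> d"
    and "2 ^ ((2 * d + 1) * length (net_params L)) \<le> N" "frac_free N u v"
  shows "(\<forall>ac\<in>set (net_pieces u v L).
            bounded_affine (common_denom (net_params L)) (2 ^ ((d + 1) * length (net_params L))) ac) \<and>
         (\<forall>t\<in>{u..v}. fold layer_eval L [t] = map (eval_affine t) (net_pieces u v L))"
  using assms(1,2)
proof (induction L rule: rev_induct)
  case Nil
  then show ?case
    by (simp add: net_pieces_def net_params_def common_denom_def bounded_affine_def eval_affine_def)
next
  case (snoc l L)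
  obtain W b where l: "l = (W, b)"
    by fastforce
  have params: "net_params (L @ [l]) = net_params L @ (concat W @ b)"
    unfolding l by (rule net_params_snoc)
  have "(2::int) ^ ((2 * d + 1) * length (net_params L)) \<le> 2 ^ ((2 * d + 1) * length (net_params (L @ [l])))"
    unfolding params by (intro power_increasing mult_le_mono2) auto
  then have "2 ^ ((2 * d + 1) * length (net_params L)) \<le> N"
    using snoc.prems(2) by (rule order_trans)
  then have IH: "\<forall>ac\<in>set (net_pieces u v L).
      bounded_affine (common_denom (net_params L)) (2 ^ ((d + 1) * length (net_params L))) ac"
    "\<forall>t\<in>{u..v}. fold layer_eval L [t] = map (eval_affine t) (net_pieces u v L)"
    using snoc unfolding params by simp_all
  have bits: "\<forall>r\<in>set (concat W @ b). rat_bits r \<le> d"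
    using snoc.prems(1) unfolding params by simp
  note step = layer_pieces_correct[OF common_denom_pos one_le_power IH(1) bits
      common_denom_append_mult_two_pow_le[OF snoc.prems[unfolded params]] assms(3)]
  show ?case
    using step IH(2) unfolding l net_pieces_def
    by (simp add: net_params_snoc common_denom_append power_add algebra_simps)
qed

lemma wf_net_last_layer:
  assumes "wf_net L"
  obtains L' W b where "L = L' @ [(W, b)]" "length W = 1" "length b = 1"
proof -
  obtain dims where dims: "dims ! length L = 1"
    "\<forall>k<length L. length (fst (L ! k)) = dims ! (k + 1) \<and> length (snd (L ! k)) = dims ! (k + 1)"
    and "L \<noteq> []"
    using assms unfolding wf_net_def by blast
  obtain W b where last: "last L = (W, b)"
    by fastforce
  have "L ! (length L - 1) = last L" "length L - 1 < length L" "length L - 1 + 1 = length L"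
    using \<open>L \<noteq> []\<close> by (simp_all add: last_conv_nth)
  then have "length W = 1" "length b = 1"
    using dims last by (metis fst_conv snd_conv)+
  moreover have "L = butlast L @ [(W, b)]"
    using \<open>L \<noteq> []\<close> last by (metis append_butlast_last_id)
  ultimately show ?thesis
    using that by blast
qed

lemma net_params_nonempty: "wf_net L \<Longrightarrow> net_params L \<noteq> []"
  by (erule wf_net_last_layer) (auto simp: net_params_snoc)

lemma net_eval_affine_on_frac_free:
  assumes "wf_net L" "\<forall>r\<in>set (net_params L). rat_bits r \<le> d"
    and "2 ^ ((2 * d + 1) * length (net_params L)) \<le> N" "frac_free N u v"
  obtains a c where "bounded_affine (common_denom (net_params L)) (2 ^ ((d + 1) * length (net_params L))) (a, c)"
    and "\<And>t. t \<in> {u..v} \<Longrightarrow> net_eval L t = a * t + c"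
proof -
  obtain L' W b where L: "L = L' @ [(W, b)]" "length W = 1" "length b = 1"
    using assms(1) by (rule wf_net_last_layer)
  have "length (net_pieces u v L) = 1"
    using L by (simp add: net_pieces_def layer_pieces_def)
  then obtain a c where ac: "net_pieces u v L = [(a, c)]"
    by (auto simp: length_Suc_conv)
  show ?thesis
    using that[of a c] net_pieces_correct[OF assms(2-4)]
    by (simp add: ac net_eval_def eval_affine_def)
qed

section \<open>Minima of piecewise affine functions\<close>

lemma affine_ge_min_endpoints:
  fixes f :: "real \<Rightarrow> real"
  assumes "\<And>t. t \<in> {u..v} \<Longrightarrow> f t = a * t + c" "t \<in> {u..v}"
  shows "min (f u) (f v) \<le> f t"
proof -
  have "f u = a * u + c" "f v = a * v + c" "f t = a * t + c"
    using assms by auto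
  moreover have "a * u \<le> a * t \<or> a * v \<le> a * t"
    using assms(2) by (cases "0 \<le> a") (auto intro: mult_left_mono mult_left_mono_neg)
  ultimately show ?thesis
    by linarith
qed

lemma finite_gap_around:
  fixes S :: "'a::linorder set"
  assumes "finite S" "lo \<in> S" "hi \<in> S" "t \<in> {lo..hi}" "t \<notin> S"
  obtains u v where "u \<in> S" "v \<in> S" "u < t" "t < v" "S \<inter> {u<..<v} = {}"
proof -
  define below where "below = {s \<in> S. s < t}"
  define above where "above = {s \<in> S. t < s}"
  have "lo \<in> below" "hi \<in> above" "finite below" "finite above"
    using assms unfolding below_def above_def by (auto simp: order.order_iff_strict)
  then have "Max below \<in> below" "Min above \<in> above"
    by (auto intro: Max_in Min_in)
  moreover have "s \<le> Max below \<or> Min above \<le> s" if "s \<in> S" for s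
    using that assms(5) \<open>finite below\<close> \<open>finite above\<close> unfolding below_def above_def
    by (cases s t rule: linorder_cases) (auto intro: Max_ge Min_le)
  then have "S \<inter> {Max below<..<Min above} = {}"
    by fastforce
  ultimately show ?thesis
    using that[of "Max below" "Min above"] unfolding below_def above_def by blast
qed

lemma min_on_interval_at_breakpoint:
  fixes f :: "real \<Rightarrow> real"
  assumes "finite S" "lo \<in> S" "hi \<in> S" "S \<subseteq> {lo..hi}"
    and affine: "\<And>u v. u \<in> S \<Longrightarrow> v \<in> S \<Longrightarrow> S \<inter> {u<..<v} = {} \<Longrightarrow> \<exists>a c. \<forall>t\<in>{u..v}. f t = a * t + c"
  shows "\<exists>s\<in>S. \<forall>t\<in>{lo..hi}. f s \<le> f t"
proof -
  obtain s where "s \<in> S" and s_min: "\<And>s'. s' \<in> S \<Longrightarrow> f s \<le> f s'"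
    using ex_min_if_finite[of "f ` S"] assms(1,2) by fastforce
  have "f s \<le> f t" if t: "t \<in> {lo..hi}" for t
  proof (cases "t \<in> S")
    case True
    then show ?thesis
      by (rule s_min)
  next
    case False
    then obtain u v where uv: "u \<in> S" "v \<in> S" "u < t" "t < v" "S \<inter> {u<..<v} = {}"
      using finite_gap_around[OF assms(1-3) t] by blast
    then obtain a c where "\<forall>t\<in>{u..v}. f t = a * t + c"
      using affine by blast
    then have "min (f u) (f v) \<le> f t"
      using uv by (intro affine_ge_min_endpoints) auto
    then show ?thesis
      using s_min[OF uv(1)] s_min[OF uv(2)] by linarith
  qed
  with \<open>s \<in> S\<close> show ?thesis
    by blast
qed

lemma net_eval_min_at_frac:
  assumes "wf_net L" "\<forall>r\<in>set (net_params L). rat_bits r \<le> d"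
    and "2 ^ ((2 * d + 1) * length (net_params L)) \<le> N"
    and "lo \<le> hi" "lo \<in> fracs_upto N" "hi \<in> fracs_upto N"
  shows "\<exists>s\<in>fracs_upto N \<inter> {lo..hi}. \<forall>t\<in>{lo..hi}. net_eval L s \<le> net_eval L t"
proof (rule min_on_interval_at_breakpoint)
  fix u v
  assume "u \<in> fracs_upto N \<inter> {lo..hi}" "v \<in> fracs_upto N \<inter> {lo..hi}"
    and "fracs_upto N \<inter> {lo..hi} \<inter> {u<..<v} = {}"
  then have "frac_free N u v"
    unfolding frac_free_def by auto
  then show "\<exists>a c. \<forall>t\<in>{u..v}. net_eval L t = a * t + c"
    using net_eval_affine_on_frac_free[OF assms(1-3)] by metis
qed (use assms(4-6) finite_fracs_upto in auto)

section \<open>Bit length of the minimum\<close>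

lemma rat_value_of_affine_at_frac:
  assumes "0 < E" "bounded_affine E M (a, c)" "E \<le> 2 ^ K" "of_int E * M \<le> 2 ^ K"
    and "s \<in> fracs_upto (2 ^ K)"
  shows "\<exists>r. real_of_rat r = a * s + c \<and> rat_bits r \<le> 4 * K + 4"
proof -
  define N :: int where "N = 2 ^ K"
  have "of_int E * M \<le> of_int N"
    using assms(4) by (simp add: N_def)
  then obtain \<alpha> \<gamma> where \<alpha>: "of_int E * a = of_int \<alpha>" and \<gamma>: "of_int E * c = of_int \<gamma>"
    and "\<bar>\<alpha>\<bar> \<le> N" "\<bar>\<gamma>\<bar> \<le> N"
    using bounded_affine_scaled_Ints[OF assms(1,2)] by blast
  obtain p q where s: "s = of_int p / of_int q" and "\<bar>p\<bar> \<le> N" "0 < q" "q \<le> N"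
    using assms(5) unfolding fracs_upto_def N_def by blast
  define r where "r = rat_of_int (\<alpha> * p + \<gamma> * q) / rat_of_int (E * q)"
  have "real_of_rat r = of_int (\<alpha> * p + \<gamma> * q) / of_int (E * q)"
    unfolding r_def by (simp add: of_rat_divide of_rat_add of_rat_mult)
  also have "\<dots> = a * s + c"
  proof -
    have a: "a = of_int \<alpha> / of_int E" and c: "c = of_int \<gamma> / of_int E"
      using \<alpha> \<gamma> assms(1) by (simp_all add: eq_divide_eq mult.commute)
    show ?thesis
      using assms(1) \<open>0 < q\<close> unfolding s a c by (simp add: field_simps)
  qed
  finally have "real_of_rat r = a * s + c" .
  have "(2::int) ^ (2 * K + 2) = 4 * (N * N)"
    unfolding N_def by (simp add: power_add power_mult_distrib flip: power2_eq_square power_mult)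
  moreover have "\<bar>\<alpha> * p + \<gamma> * q\<bar> \<le> N * N + N * N"
    using \<open>\<bar>\<alpha>\<bar> \<le> N\<close> \<open>\<bar>\<gamma>\<bar> \<le> N\<close> \<open>\<bar>p\<bar> \<le> N\<close> \<open>0 < q\<close> \<open>q \<le> N\<close>
    by (intro order_trans[OF abs_triangle_ineq] add_mono) (auto simp: abs_mult intro: mult_mono)
  moreover have "E * q \<le> N * N"
    using assms(1,3) \<open>0 < q\<close> \<open>q \<le> N\<close> unfolding N_def by (intro mult_mono) auto
  moreover have "0 < N * N"
    unfolding N_def by simp
  ultimately have "rat_bits r \<le> (2 * K + 2) + (2 * K + 2)"
    unfolding r_def using assms(1) \<open>0 < q\<close> by (intro rat_bits_divide_le) auto
  with \<open>real_of_rat r = a * s + c\<close> show ?thesis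
    by auto
qed

lemma net_eval_at_frac:
  assumes "wf_net L" "\<forall>r\<in>set (net_params L). rat_bits r \<le> d"
    and "(2 * d + 1) * length (net_params L) \<le> K" "s \<in> fracs_upto (2 ^ K)"
  shows "\<exists>r. real_of_rat r = net_eval L s \<and> rat_bits r \<le> 4 * K + 4"
proof -
  define E where "E = common_denom (net_params L)"
  define M :: real where "M = 2 ^ ((d + 1) * length (net_params L))"
  have "(2::int) ^ ((2 * d + 1) * length (net_params L)) \<le> 2 ^ K"
    using assms(3) by (rule power_increasing) simp
  moreover have "frac_free (2 ^ K) s s"
    by (simp add: frac_free_def)
  ultimately obtain a c where ac: "bounded_affine E M (a, c)" "net_eval L s = a * s + c"
    using net_eval_affine_on_frac_free[OF assms(1,2)] unfolding E_def M_def by (metis atLeastAtMost_singleton insertI1)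
  have "E \<le> 2 ^ (d * length (net_params L))"
    unfolding E_def using assms(2) by (rule common_denom_le)
  also have "\<dots> \<le> 2 ^ K"
    using assms(3) by (intro power_increasing) auto
  finally have "E \<le> 2 ^ K" .
  have "of_int E * M \<le> (2::real) ^ ((2 * d + 1) * length (net_params L))"
    unfolding E_def M_def using assms(2) by (rule common_denom_mult_two_pow_le)
  also have "\<dots> \<le> 2 ^ K"
    using assms(3) by (intro power_increasing) auto
  finally have "of_int E * M \<le> 2 ^ K" .
  then show ?thesis
    using rat_value_of_affine_at_frac[OF _ ac(1) \<open>E \<le> 2 ^ K\<close> _ assms(4)] ac(2) common_denom_pos
    unfolding E_def by simp
qed

lemma net_eval_min_rational:
  assumes "wf_net L" "\<forall>r\<in>set (net_params L) \<union> {x, \<epsilon>}. rat_bits r \<le> d" "0 \<le> \<epsilon>"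
  defines "I \<equiv> {real_of_rat (x - \<epsilon>)..real_of_rat (x + \<epsilon>)}"
  shows "\<exists>q. real_of_rat q \<in> net_eval L ` I \<and> (\<forall>t\<in>I. real_of_rat q \<le> net_eval L t) \<and>
           rat_bits q \<le> 4 * ((2 * d + 1) * (length (net_params L) + 1)) + 4"
proof -
  define K where "K = (2 * d + 1) * (length (net_params L) + 1)"
  have L_bits: "\<forall>r\<in>set (net_params L). rat_bits r \<le> d"
    using assms(2) by simp
  have "fracs_upto (2 ^ (2 * d + 1)) \<subseteq> fracs_upto (2 ^ K)"
    unfolding K_def by (intro fracs_upto_mono power_increasing) auto
  then have ends: "real_of_rat (x - \<epsilon>) \<in> fracs_upto (2 ^ K)" "real_of_rat (x + \<epsilon>) \<in> fracs_upto (2 ^ K)"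
    using of_rat_add_mem_fracs_upto[of x d "- \<epsilon>"] of_rat_add_mem_fracs_upto[of x d \<epsilon>] assms(2) by auto
  have "(2::int) ^ ((2 * d + 1) * length (net_params L)) \<le> 2 ^ K"
    unfolding K_def by (intro power_increasing) auto
  moreover have "real_of_rat (x - \<epsilon>) \<le> real_of_rat (x + \<epsilon>)"
    using assms(3) by (simp add: of_rat_less_eq)
  ultimately obtain s where s: "s \<in> fracs_upto (2 ^ K) \<inter> I" and s_min: "\<forall>t\<in>I. net_eval L s \<le> net_eval L t"
    using net_eval_min_at_frac[OF assms(1) L_bits _ _ ends] unfolding I_def by blast
  obtain r where "real_of_rat r = net_eval L s" "rat_bits r \<le> 4 * K + 4"
    using net_eval_at_frac[OF assms(1) L_bits _ IntD1[OF s]] unfolding K_def by auto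
  with s s_min show ?thesis
    unfolding K_def by (intro exI[of _ r]) auto
qed

lemma linear_bits_bound:
  fixes d m :: nat
  assumes "2 \<le> d" "1 \<le> m"
  shows "4 * ((2 * d + 1) * (m + 1)) + 4 \<le> 30 * m * d"
proof -
  have "d * 1 \<le> d * m" "2 * m \<le> d * m" "2 * 1 \<le> d * m"
    using assms by (intro mult_le_mono mult_le_mono1 mult_le_mono2; simp)+
  moreover have "4 * ((2 * d + 1) * (m + 1)) + 4 = 8 * (d * m) + 8 * d + 4 * m + 8"
    "30 * m * d = 30 * (d * m)"
    by (simp_all add: algebra_simps)
  ultimately show ?thesis
    by linarith
qed

theorem lemma11:
  "\<exists>C::real. C > 0 \<and>
     (\<forall>(L::relu_net) (x::rat) (\<epsilon>::rat).
        wf_net L \<longrightarrow> \<epsilon> \<ge> 0 \<longrightarrow>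
        (let m = num_params L;
             d = Max (rat_bits ` (set (net_params L) \<union> {x, \<epsilon>}))
         in \<exists>q::rat.
              real_of_rat q \<in> net_eval L ` {real_of_rat (x - \<epsilon>) .. real_of_rat (x + \<epsilon>)} \<and>
              (\<forall>t\<in>{real_of_rat (x - \<epsilon>) .. real_of_rat (x + \<epsilon>)}. real_of_rat q \<le> net_eval L t) \<and>
              real (rat_bits q) \<le> C * real m * real d))"
proof (intro exI[of _ 30] conjI allI impI)
  show "(0::real) < 30"
    by simp
  fix L :: relu_net and x \<epsilon> :: rat
  assume L: "wf_net L" and "0 \<le> \<epsilon>"
  let ?I = "{real_of_rat (x - \<epsilon>)..real_of_rat (x + \<epsilon>)}"
  define d where "d = Max (rat_bits ` (set (net_params L) \<union> {x, \<epsilon>}))"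
  have bits: "\<forall>r\<in>set (net_params L) \<union> {x, \<epsilon>}. rat_bits r \<le> d"
    unfolding d_def by (intro ballI Max_ge) auto
  then have "2 \<le> d"
    using rat_bits_ge_2[of x] by auto
  have "1 \<le> num_params L"
    using net_params_nonempty[OF L] by (simp add: num_params_def Suc_le_eq)
  obtain q where q: "real_of_rat q \<in> net_eval L ` ?I" "\<forall>t\<in>?I. real_of_rat q \<le> net_eval L t"
    and "rat_bits q \<le> 4 * ((2 * d + 1) * (num_params L + 1)) + 4"
    using net_eval_min_rational[OF L bits \<open>0 \<le> \<epsilon>\<close>] unfolding num_params_def by blast
  then have "rat_bits q \<le> 30 * num_params L * d"
    using linear_bits_bound[OF \<open>2 \<le> d\<close> \<open>1 \<le> num_params L\<close>] by linarith
  then have "real (rat_bits q) \<le> 30 * real (num_params L) * real d"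
    by (metis of_nat_le_iff of_nat_mult of_nat_numeral)
  with q show "let m = num_params L; d = Max (rat_bits ` (set (net_params L) \<union> {x, \<epsilon>}))
    in \<exists>q. real_of_rat q \<in> net_eval L ` ?I \<and> (\<forall>t\<in>?I. real_of_rat q \<le> net_eval L t) \<and>
           real (rat_bits q) \<le> 30 * real m * real d"
    unfolding Let_def d_def[symmetric] by blast
qed

end
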